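(* Let ${\mathsf q}$ be a prime power, $t\in\{0,\ldots,{\mathsf K}-1\}$, $\mathbb{D}\in\mathbb{F}_{\mathsf q}^{{\mathsf K}\times{\mathsf N}}$, $\mathcal L$ a leader set, and $\mathcal A\subseteq[{\mathsf K}]\setminus\mathcal L$ with $|\mathcal A|=t+1$. Then, for every choice of the subfiles $F_{i,\mathcal W}$, $$W_{\mathcal A}=\sum_{\substack{\mathcal S\subseteq\mathcal A\cup\mathcal L:\ |\mathcal S|=t+1,\ \mathcal S\neq\mathcal A}}\beta_{\mathcal A,\mathcal S}\,W_{\mathcal S},\qquad \beta_{\mathcal A,\mathcal S}=(-1)^{1+\mathrm{Tot}(\overline{\mathrm{Ind}}_{\mathcal S})}\det\!\big(\mathbb{D}'_{\mathcal A\setminus\mathcal S,\ \mathrm{Ind}_{\mathcal S}}\big).$$ In particular every message $W_{\mathcal S}$ on the right-hand side satisfies $\mathcal S\cap\mathcal L\neq\emptyset$.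
   Context: Notation: sets of integers are listed increasingly, $\mathcal S(1)<\mathcal S(2)<\cdots$. $\mathbb{D}$ has rows $\mathbf y_k=(y_{k,1},\ldots,y_{k,{\mathsf N}})$. A leader set is $\mathcal L\subseteq[{\mathsf K}]$ with $|\mathcal L|=\mathrm{rank}_{\mathsf q}(\mathbb{D}_{\mathcal L})=\mathrm{rank}_{\mathsf q}(\mathbb{D})$, where $\mathbb{D}_{\mathcal L}$ is the submatrix of rows in $\mathcal L$. For each $k\in[{\mathsf K}]$ let $\mathbf x_k=(x_{k,1},\ldots,x_{k,|\mathcal L|})\in\mathbb{F}_{\mathsf q}^{|\mathcal L|}$ be the unique vector with $\mathbf y_k=\sum_{j}x_{k,j}\mathbf y_{\mathcal L(j)}$, and let $\mathbb{D}'$ be the ${\mathsf K}\times|\mathcal L|$ matrix with rows $\mathbf x_k$. Subfiles $F_{i,\mathcal W}\in\mathbb{F}_{\mathsf q}^{\ell}$ for $i\in[{\mathsf N}]$, $\mathcal W\subseteq[{\mathsf K}]$, $|\mathcal W|=t$. Blocks $B_{k,\mathcal W}=\sum_n y_{k,n}F_{n,\mathcal W}$. For $\mathcal S\subseteq[{\mathsf K}]$, $|\mathcal S|=t+1$, let $\mathcal L_{\mathcal S}=\mathcal S\cap\mathcal L$, $\mathcal N_{\mathcal S}=\mathcal S\setminus\mathcal L$, and $W_{\mathcal S}=\sum_{i\in[|\mathcal L_{\mathcal S}|]}(-1)^{i-1}B_{\mathcal L_{\mathcal S}(i),\mathcal S\setminus\{\mathcal L_{\mathcal S}(i)\}}+\sum_{j\in[|\mathcal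 N_{\mathcal S}|]}(-1)^{j-1}B_{\mathcal N_{\mathcal S}(j),\mathcal S\setminus\{\mathcal N_{\mathcal S}(j)\}}$. For $\mathcal S\subseteq\mathcal A\cup\mathcal L$: $\mathrm{Ind}_{\mathcal S}=\{i\in[|\mathcal L|]:\mathcal L(i)\in\mathcal S\}$, $\overline{\mathrm{Ind}}_{\mathcal S}=\{i\in[t+1]:\mathcal A(i)\notin\mathcal S\}$, and $\mathrm{Tot}(\mathcal X)$ is the sum of the elements of $\mathcal X$. When $|\mathcal S|=t+1$, $|\mathcal A\setminus\mathcal S|=|\mathrm{Ind}_{\mathcal S}|$, and $\mathbb{D}'_{\mathcal A\setminus\mathcal S,\mathrm{Ind}_{\mathcal S}}$ is the square submatrix of $\mathbb{D}'$ with rows indexed by $\mathcal A\setminus\mathcal S$ and columns indexed by $\mathrm{Ind}_{\mathcal S}$, both taken in increasing order. *)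

theory Defs
  imports Main "Jordan_Normal_Form.Determinant"
begin

text \<open>Users are indexed by [K] = {1..K}, files by [N] = {1..N}.
  The demand matrix D is a function nat => nat => 'a where D k n is the entry
  in row k, column n (only 1 <= k <= K, 1 <= n <= N are relevant).
  Subfiles F i W are vectors in F_q^ell, represented by their coordinate
  functions F i W p for p < ell.\<close>

definition elem :: "nat set \<Rightarrow> nat \<Rightarrow> nat" where
  "elem S i = sorted_list_of_set S ! (i - 1)"

definition lin_indep_rows :: "(nat \<Rightarrow> nat \<Rightarrow> 'a::field) \<Rightarrow> nat \<Rightarrow> nat set \<Rightarrow> bool" where
  "lin_indep_rows D N R \<longleftrightarrow>
     (\<forall>c :: nat \<Rightarrow> 'a. (\<forall>n\<in>{1..N}. (\<Sum>k\<in>R. c k * D k n) = 0) \<longrightarrow> (\<forall>k\<in>R. c k = 0))"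

definition rank_rows :: "(nat \<Rightarrow> nat \<Rightarrow> 'a::field) \<Rightarrow> nat \<Rightarrow> nat set \<Rightarrow> nat" where
  "rank_rows D N R = Max (card ` {S. S \<subseteq> R \<and> lin_indep_rows D N S})"

definition leader_set :: "(nat \<Rightarrow> nat \<Rightarrow> 'a::field) \<Rightarrow> nat \<Rightarrow> nat \<Rightarrow> nat set \<Rightarrow> bool" where
  "leader_set D K N L \<longleftrightarrow> L \<subseteq> {1..K} \<and>
     card L = rank_rows D N L \<and> rank_rows D N L = rank_rows D N {1..K}"

text \<open>D' k j = x_{k,j}: the unique coefficients with y_k = sum_j x_{k,j} y_{L(j)}
  (coefficient vector indexed by j in {1..|L|}, set to 0 outside).\<close>
definition Dprime :: "(nat \<Rightarrow> nat \<Rightarrow> 'a::field) \<Rightarrow> nat \<Rightarrow> nat set \<Rightarrow> nat \<Rightarrow> nat \<Rightarrow> 'a" where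
  "Dprime D N L k = (THE x :: nat \<Rightarrow> 'a.
      (\<forall>n\<in>{1..N}. D k n = (\<Sum>j\<in>{1..card L}. x j * D (elem L j) n)) \<and>
      (\<forall>j. j \<notin> {1..card L} \<longrightarrow> x j = 0))"

definition blockB :: "(nat \<Rightarrow> nat \<Rightarrow> 'a::field) \<Rightarrow> nat \<Rightarrow> (nat \<Rightarrow> nat set \<Rightarrow> nat \<Rightarrow> 'a)
    \<Rightarrow> nat \<Rightarrow> nat set \<Rightarrow> nat \<Rightarrow> 'a" where
  "blockB D N F k W p = (\<Sum>n\<in>{1..N}. D k n * F n W p)"

definition msgW :: "(nat \<Rightarrow> nat \<Rightarrow> 'a::field) \<Rightarrow> nat \<Rightarrow> nat set \<Rightarrow> (nat \<Rightarrow> nat set \<Rightarrow> nat \<Rightarrow> 'a)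
    \<Rightarrow> nat set \<Rightarrow> nat \<Rightarrow> 'a" where
  "msgW D N L F S p =
    (let LS = S \<inter> L; NS = S - L in
      (\<Sum>i\<in>{1..card LS}. (-1) ^ (i - 1) * blockB D N F (elem LS i) (S - {elem LS i}) p)
    + (\<Sum>j\<in>{1..card NS}. (-1) ^ (j - 1) * blockB D N F (elem NS j) (S - {elem NS j}) p))"

definition Ind :: "nat set \<Rightarrow> nat set \<Rightarrow> nat set" where
  "Ind L S = {i\<in>{1..card L}. elem L i \<in> S}"

definition IndBar :: "nat \<Rightarrow> nat set \<Rightarrow> nat set \<Rightarrow> nat set" where
  "IndBar t A S = {i\<in>{1..t+1}. elem A i \<notin> S}"

definition Tot :: "nat set \<Rightarrow> nat" where
  "Tot X = (\<Sum>x\<in>X. x)"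

definition subDprime :: "(nat \<Rightarrow> nat \<Rightarrow> 'a::field) \<Rightarrow> nat \<Rightarrow> nat set \<Rightarrow> nat set \<Rightarrow> nat set \<Rightarrow> 'a mat" where
  "subDprime D N L A S = mat (card (A - S)) (card (Ind L S))
     (\<lambda>(i, j). Dprime D N L (elem (A - S) (i + 1)) (elem (Ind L S) (j + 1)))"

definition beta :: "(nat \<Rightarrow> nat \<Rightarrow> 'a::field) \<Rightarrow> nat \<Rightarrow> nat set \<Rightarrow> nat \<Rightarrow> nat set \<Rightarrow> nat set \<Rightarrow> 'a" where
  "beta D N L t A S = (-1) ^ (1 + Tot (IndBar t A S)) * det (subDprime D N L A S)"

end

theory Submission
  imports Defs
begin

text \<open>
Expand every block B_{k,S-{k}} in the leaders, B_k = \<Sum>_j x_{k,j} B_{L(j)}.  Summing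
\<beta>_{A,S} W_S over all (t+1)-subsets S of A \<union> L (including S = A, where \<beta>_{A,A} = -1)
and regrouping by W = S - {k} and j, the coefficient of B_{L(j),W} becomes
\<Sum>_{k \<notin> W} \<beta>_{A,W+k} \<sigma>_{W+k}(k) x_{k,j}, with \<sigma> the sign of B_k in W_{W+k}.  The terms with
k \<in> A form the Laplace expansion, along its first column, of the matrix with rows A - W and
columns j, Ind_W of D'; the only nonzero term with k \<in> L, the one with k = L(j), is the same
determinant with the opposite sign.  So every coefficient vanishes.
\<close>

definition pos :: "nat set \<Rightarrow> nat \<Rightarrow> nat" where
  "pos X y = card {w\<in>X. w < y}"

text \<open>pos is 0-based while elem is 1-based: elem X (Suc (pos X y)) = y.\<close>

lemma set_take_sorted_distinct:
  fixes xs :: "nat list"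
  assumes "sorted xs" "distinct xs" "i < length xs"
  shows "{w\<in>set xs. w < xs!i} = set (take i xs)"
proof
  show "{w \<in> set xs. w < xs ! i} \<subseteq> set (take i xs)"
  proof
    fix w assume "w \<in> {w \<in> set xs. w < xs ! i}"
    then obtain m where m: "m < length xs" "w = xs!m" "xs!m < xs!i" by (auto simp: in_set_conv_nth)
    have "m < i"
    proof (rule ccontr)
      assume "\<not> m < i" then have "xs!i \<le> xs!m" using assms m by (simp add: sorted_nth_mono)
      with m show False by simp
    qed
    then show "w \<in> set (take i xs)" using m by (auto simp: in_set_conv_nth)
  qed
  show "set (take i xs) \<subseteq> {w \<in> set xs. w < xs ! i}"
  proof
    fix w assume "w \<in> set (take i xs)"
    then obtain m where m: "m < i" "w = xs!m" using assms by (auto simp: in_set_conv_nth)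
    have "xs!m \<le> xs!i" using assms m by (simp add: sorted_nth_mono)
    moreover have "xs!m \<noteq> xs!i" using assms m by (simp add: nth_eq_iff_index_eq)
    ultimately show "w \<in> {w \<in> set xs. w < xs ! i}" using m assms by auto
  qed
qed

lemma
  assumes "finite X" "i < card X"
  shows elem_Suc_mem: "elem X (Suc i) \<in> X"
    and pos_elem_Suc: "pos X (elem X (Suc i)) = i"
proof -
  let ?xs = "sorted_list_of_set X"
  have e: "elem X (Suc i) = ?xs ! i" by (simp add: elem_def)
  show "elem X (Suc i) \<in> X" using assms e by (metis length_sorted_list_of_set nth_mem set_sorted_list_of_set)
  have "{w\<in>X. w < ?xs!i} = set (take i ?xs)"
    using set_take_sorted_distinct[of ?xs i] assms by simp
  then show "pos X (elem X (Suc i)) = i" using assms e by (simp add: pos_def distinct_card)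
qed

lemma pos_le_mono: "finite X \<Longrightarrow> y \<le> z \<Longrightarrow> pos X y \<le> pos X z"
  unfolding pos_def by (intro card_mono) auto

lemma pos_less_mono:
  assumes "finite X" "y \<in> X" "y < z"
  shows "pos X y < pos X z"
proof -
  have "insert y {w\<in>X. w < y} \<subseteq> {w\<in>X. w < z}" using assms by auto
  then have "card (insert y {w\<in>X. w < y}) \<le> card {w\<in>X. w < z}"
    using assms by (intro card_mono) auto
  then show ?thesis using assms by (simp add: pos_def)
qed

lemma pos_less_card: "finite X \<Longrightarrow> y \<in> X \<Longrightarrow> pos X y < card X"
  unfolding pos_def by (rule psubset_card_mono) auto

lemma strict_mono_on_pos: "finite X \<Longrightarrow> strict_mono_on X (pos X)"
  by (rule strict_mono_onI) (rule pos_less_mono)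

lemma inj_on_pos: "finite X \<Longrightarrow> inj_on (pos X) X"
  using strict_mono_on_imp_inj_on strict_mono_on_pos by blast

lemma elem_Suc_pos: "finite X \<Longrightarrow> y \<in> X \<Longrightarrow> elem X (Suc (pos X y)) = y"
  using inj_on_pos elem_Suc_mem pos_elem_Suc pos_less_card by (metis inj_on_eq_iff)

lemma pos_elem:
  assumes "finite X" "i \<in> {1..card X}"
  shows "pos X (elem X i) = i - 1" "elem X i \<in> X"
  using pos_elem_Suc[OF assms(1), of "i - 1"] elem_Suc_mem[OF assms(1), of "i - 1"] assms(2) by auto

lemma bij_betw_elem_Suc: "finite X \<Longrightarrow> bij_betw (\<lambda>i. elem X (Suc i)) {..<card X} X"
  by (rule bij_betw_byWitness[where f' = "pos X"])
     (auto simp: elem_Suc_mem pos_elem_Suc elem_Suc_pos pos_less_card)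

lemma bij_betw_elem: "finite X \<Longrightarrow> bij_betw (elem X) {1..card X} X"
  by (rule bij_betw_byWitness[where f' = "\<lambda>y. Suc (pos X y)"])
     (auto simp: pos_elem elem_Suc_pos Suc_le_eq pos_less_card)

lemma sum_elem: "finite X \<Longrightarrow> (\<Sum>j\<in>{1..card X}. g (elem X j)) = (\<Sum>l\<in>X. g l)"
  using sum.reindex_bij_betw[OF bij_betw_elem] by blast

lemma pos_image:
  assumes "strict_mono_on Y f" "X \<subseteq> Y" "y \<in> Y" "finite X"
  shows "pos (f ` X) (f y) = pos X y"
proof -
  have inj: "inj_on f Y" using assms(1) by (rule strict_mono_on_imp_inj_on)
  have "{w\<in>f ` X. w < f y} = f ` {w\<in>X. w < y}"
    using assms(1-3) by (auto simp: strict_mono_on_less)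
  moreover have "inj_on f {w\<in>X. w < y}" by (rule inj_on_subset[OF inj]) (use assms(2) in auto)
  ultimately show ?thesis unfolding pos_def by (simp add: card_image)
qed

lemma pos_insert_self: "finite C \<Longrightarrow> j \<notin> C \<Longrightarrow> pos (insert j C) j = pos C j"
  unfolding pos_def by (rule arg_cong[where f=card]) auto

lemma card_Diff_elem: "finite X \<Longrightarrow> i < card X \<Longrightarrow> card (X - {elem X (Suc i)}) = card X - 1"
  by (simp add: elem_Suc_mem card_Diff_singleton)

lemma elem_Diff_elem:
  assumes f: "finite X" and p: "p < card X" and i: "i < card X - 1"
  shows "elem (X - {elem X (Suc p)}) (Suc i) = elem X (if i < p then Suc i else Suc (Suc i))"
proof -
  define z where "z = elem X (Suc p)"
  define q where "q = (if i < p then i else Suc i)"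
  have q: "q < card X" unfolding q_def using i p by auto
  define y where "y = elem X (Suc q)"
  have yX: "y \<in> X" and py: "pos X y = q" using elem_Suc_mem[OF f q] pos_elem_Suc[OF f q] by (simp_all add: y_def)
  have zX: "z \<in> X" and pz: "pos X z = p" using elem_Suc_mem[OF f p] pos_elem_Suc[OF f p] by (simp_all add: z_def)
  have yz: "y \<noteq> z" using py pz by (auto simp: q_def split: if_splits)
  have "pos (X - {z}) y = i"
  proof (cases "i < p")
    case True
    then have "y < z" using py pz pos_le_mono[OF f, of z y] by (fastforce simp: q_def)
    then have "{w\<in>X - {z}. w < y} = {w\<in>X. w < y}" by auto
    then show ?thesis using py True unfolding pos_def by (simp add: q_def)
  next
    case False
    then have zy: "z < y" using py pz pos_le_mono[OF f, of y z] by (fastforce simp: q_def)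
    then have "{w\<in>X - {z}. w < y} = {w\<in>X. w < y} - {z}" by auto
    moreover have "z \<in> {w\<in>X. w < y}" using zX zy by simp
    ultimately show ?thesis using py False f unfolding pos_def by (simp add: q_def card_Diff_singleton)
  qed
  then have "elem (X - {z}) (Suc i) = y" using elem_Suc_pos[of "X - {z}" y] f yX yz by simp
  then show ?thesis by (simp add: y_def q_def z_def)
qed

definition msg_sign :: "nat set \<Rightarrow> nat set \<Rightarrow> nat \<Rightarrow> 'a::comm_ring_1" where
  "msg_sign L S k = (if k \<in> L then (-1) ^ pos (S \<inter> L) k else (-1) ^ pos (S - L) k)"

lemma sum_alternating_elem:
  fixes f :: "nat \<Rightarrow> 'a::comm_ring_1"
  assumes "finite X"
  shows "(\<Sum>i\<in>{1..card X}. (-1) ^ (i - 1) * f (elem X i)) = (\<Sum>k\<in>X. (-1) ^ pos X k * f k)"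
proof -
  have "(\<Sum>i\<in>{1..card X}. (-1) ^ (i - 1) * f (elem X i))
      = (\<Sum>i\<in>{1..card X}. (-1) ^ pos X (elem X i) * f (elem X i))"
    by (rule sum.cong) (auto simp: pos_elem[OF assms])
  also have "\<dots> = (\<Sum>k\<in>X. (-1) ^ pos X k * f k)" by (rule sum_elem[OF assms])
  finally show ?thesis .
qed

lemma msgW_eq_signed_sum:
  assumes "finite S"
  shows "msgW D N L F S p = (\<Sum>k\<in>S. msg_sign L S k * blockB D N F k (S - {k}) p)"
proof -
  have leaders: "(\<Sum>i\<in>{1..card (S \<inter> L)}. (-1) ^ (i - 1) * blockB D N F (elem (S \<inter> L) i) (S - {elem (S \<inter> L) i}) p)
      = (\<Sum>k\<in>S \<inter> L. msg_sign L S k * blockB D N F k (S - {k}) p)"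
    using assms by (subst sum_alternating_elem) (auto simp: msg_sign_def intro!: sum.cong)
  have others: "(\<Sum>i\<in>{1..card (S - L)}. (-1) ^ (i - 1) * blockB D N F (elem (S - L) i) (S - {elem (S - L) i}) p)
      = (\<Sum>k\<in>S - L. msg_sign L S k * blockB D N F k (S - {k}) p)"
    using assms by (subst sum_alternating_elem) (auto simp: msg_sign_def intro!: sum.cong)
  have "msgW D N L F S p = (\<Sum>k\<in>S \<inter> L. msg_sign L S k * blockB D N F k (S - {k}) p)
     + (\<Sum>k\<in>S - L. msg_sign L S k * blockB D N F k (S - {k}) p)"
    unfolding msgW_def Let_def leaders others ..
  also have "\<dots> = (\<Sum>k\<in>S. msg_sign L S k * blockB D N F k (S - {k}) p)"
    by (rule sum.Int_Diff[OF assms, symmetric])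
  finally show ?thesis .
qed

lemma card_le_rank_rows:
  assumes "finite R" "S \<subseteq> R" "lin_indep_rows D N S"
  shows "card S \<le> rank_rows D N R"
proof -
  have "finite {S. S \<subseteq> R \<and> lin_indep_rows D N S}" using assms(1) by simp
  then show ?thesis unfolding rank_rows_def using assms(2,3) by (auto intro!: Max_ge)
qed

lemma rank_rows_attained:
  assumes "finite R"
  obtains S where "S \<subseteq> R" "lin_indep_rows D N S" "card S = rank_rows D N R"
proof -
  have "finite {S. S \<subseteq> R \<and> lin_indep_rows D N S}" using assms by simp
  moreover have "{} \<in> {S. S \<subseteq> R \<and> lin_indep_rows D N S}" by (simp add: lin_indep_rows_def)
  ultimately have "rank_rows D N R \<in> card ` {S. S \<subseteq> R \<and> lin_indep_rows D N S}"
    unfolding rank_rows_def by (intro Max_in) auto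
  then show ?thesis using that by auto
qed

lemma
  assumes "leader_set D K N L"
  shows leader_set_finite: "finite L"
    and leader_set_subset: "L \<subseteq> {1..K}"
    and leader_set_card: "card L = rank_rows D N {1..K}"
    and leader_set_lin_indep: "lin_indep_rows D N L"
proof -
  show L: "L \<subseteq> {1..K}" and "card L = rank_rows D N {1..K}"
    using assms unfolding leader_set_def by simp_all
  show f: "finite L" using L finite_subset by blast
  obtain S where S: "S \<subseteq> L" "lin_indep_rows D N S" "card S = rank_rows D N L"
    using rank_rows_attained[OF f] by blast
  have "S = L" using card_subset_eq[OF f S(1)] S(3) assms unfolding leader_set_def by simp
  then show "lin_indep_rows D N L" using S(2) by simp
qed

definition represents :: "(nat \<Rightarrow> nat \<Rightarrow> 'a::field) \<Rightarrow> nat \<Rightarrow> nat set \<Rightarrow> nat \<Rightarrow> (nat \<Rightarrow> 'a) \<Rightarrow> bool" where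
  "represents D N L k x \<longleftrightarrow> (\<forall>n\<in>{1..N}. D k n = (\<Sum>j\<in>{1..card L}. x j * D (elem L j) n)) \<and>
      (\<forall>j. j \<notin> {1..card L} \<longrightarrow> x j = 0)"

lemma represents_unique:
  assumes "finite L" "lin_indep_rows D N L" "represents D N L k x" "represents D N L k y"
  shows "x = y"
proof
  fix j
  define c where "c l = x (Suc (pos L l)) - y (Suc (pos L l))" for l
  have "(\<Sum>l\<in>L. c l * D l n) = 0" if n: "n \<in> {1..N}" for n
  proof -
    have "(\<Sum>l\<in>L. c l * D l n) = (\<Sum>i\<in>{1..card L}. (x i - y i) * D (elem L i) n)"
      unfolding sum_elem[OF assms(1), symmetric, of "\<lambda>l. c l * D l n"]
      by (rule sum.cong) (auto simp: c_def pos_elem[OF assms(1)])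
    also have "\<dots> = D k n - D k n"
      using assms(3,4) n by (simp add: represents_def algebra_simps sum_subtractf)
    finally show ?thesis by simp
  qed
  then have c0: "\<forall>l\<in>L. c l = 0" using assms(2) unfolding lin_indep_rows_def by blast
  show "x j = y j"
  proof (cases "j \<in> {1..card L}")
    case True
    then have "c (elem L j) = 0" using c0 pos_elem[OF assms(1)] by blast
    then show ?thesis using True by (simp add: c_def pos_elem[OF assms(1)])
  next
    case False
    then show ?thesis using assms(3,4) by (simp add: represents_def)
  qed
qed

lemma represents_leader:
  assumes "finite L" "k \<in> L"
  shows "represents D N L k (\<lambda>j. if j = Suc (pos L k) then 1 else 0)"
proof -
  have "Suc (pos L k) \<in> {1..card L}" using pos_less_card[OF assms] by simp
  moreover have "elem L (Suc (pos L k)) = k" by (rule elem_Suc_pos[OF assms])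
  ultimately show ?thesis
    unfolding represents_def by (auto simp: if_distrib[where f = "\<lambda>c. c * _"] sum.delta cong: if_cong)
qed

lemma lin_indep_rows_insert:
  assumes f: "finite L" and ind: "lin_indep_rows D N L" and kL: "k \<notin> L"
    and nrep: "\<nexists>x. represents D N L k x"
  shows "lin_indep_rows D N (insert k L)"
  unfolding lin_indep_rows_def
proof (intro allI impI)
  fix c :: "nat \<Rightarrow> 'a"
  assume "\<forall>n\<in>{1..N}. (\<Sum>l\<in>insert k L. c l * D l n) = 0"
  then have H: "c k * D k n + (\<Sum>l\<in>L. c l * D l n) = 0" if "n \<in> {1..N}" for n
    using that f kL by simp
  have ck: "c k = 0"
  proof (rule ccontr)
    assume ck: "c k \<noteq> 0"
    define x where "x j = (if j \<in> {1..card L} then - c (elem L j) / c k else 0)" for j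
    have "represents D N L k x" unfolding represents_def
    proof (intro conjI ballI allI impI)
      fix n assume n: "n \<in> {1..N}"
      have "(\<Sum>j\<in>{1..card L}. x j * D (elem L j) n) = (\<Sum>l\<in>L. (- c l / c k) * D l n)"
        unfolding sum_elem[OF f, symmetric] by (rule sum.cong) (simp_all add: x_def)
      also have "\<dots> = - (\<Sum>l\<in>L. c l * D l n) / c k"
        by (simp add: sum_divide_distrib sum_negf)
      also have "\<dots> = D k n" using H[OF n] ck by (simp add: add_eq_0_iff)
      finally show "D k n = (\<Sum>j\<in>{1..card L}. x j * D (elem L j) n)" by simp
    qed (auto simp: x_def)
    then show False using nrep by blast
  qed
  then have "\<forall>l\<in>L. c l = 0" using H ind unfolding lin_indep_rows_def by simp
  then show "\<forall>l\<in>insert k L. c l = 0" using ck by simp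
qed

lemma represents_exists:
  assumes ls: "leader_set D K N L" and k: "k \<in> {1..K}"
  shows "\<exists>x. represents D N L k x"
proof (cases "k \<in> L")
  case True
  then show ?thesis using represents_leader[OF leader_set_finite[OF ls]] by blast
next
  case False
  show ?thesis
  proof (rule ccontr)
    assume "\<nexists>x. represents D N L k x"
    then have "lin_indep_rows D N (insert k L)"
      using lin_indep_rows_insert leader_set_finite[OF ls] leader_set_lin_indep[OF ls] False by blast
    moreover have "insert k L \<subseteq> {1..K}" using leader_set_subset[OF ls] k by simp
    ultimately have "card (insert k L) \<le> rank_rows D N {1..K}" by (intro card_le_rank_rows) simp_all
    then show False using leader_set_finite[OF ls] leader_set_card[OF ls] False by simp
  qed
qed

lemma represents_Dprime:
  assumes ls: "leader_set D K N L" and k: "k \<in> {1..K}"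
  shows "represents D N L k (Dprime D N L k)"
proof -
  have "\<exists>!x. represents D N L k x"
    using represents_exists[OF ls k] represents_unique leader_set_finite[OF ls] leader_set_lin_indep[OF ls]
    by blast
  then show ?thesis unfolding Dprime_def represents_def[symmetric] by (rule theI')
qed

lemma Dprime_leader:
  assumes ls: "leader_set D K N L" and k: "k \<in> L" and j: "j \<in> {1..card L}"
  shows "Dprime D N L k j = (if k = elem L j then 1 else 0)"
proof -
  note f = leader_set_finite[OF ls]
  have "Dprime D N L k = (\<lambda>j. if j = Suc (pos L k) then 1 else 0)"
    using represents_unique[OF f leader_set_lin_indep[OF ls]] represents_leader[OF f k]
      represents_Dprime[OF ls] k leader_set_subset[OF ls] by blast
  moreover have "j = Suc (pos L k) \<longleftrightarrow> k = elem L j"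
    using elem_Suc_pos[OF f k] pos_elem[OF f j] j by auto
  ultimately show ?thesis by simp
qed

lemma blockB_expand:
  assumes ls: "leader_set D K N L" and k: "k \<in> {1..K}"
  shows "blockB D N F k W p = (\<Sum>j\<in>{1..card L}. Dprime D N L k j * blockB D N F (elem L j) W p)"
proof -
  have r: "D k n = (\<Sum>j\<in>{1..card L}. Dprime D N L k j * D (elem L j) n)" if "n \<in> {1..N}" for n
    using represents_Dprime[OF ls k] that unfolding represents_def by blast
  have "blockB D N F k W p = (\<Sum>n\<in>{1..N}. \<Sum>j\<in>{1..card L}. Dprime D N L k j * (D (elem L j) n * F n W p))"
    unfolding blockB_def by (rule sum.cong) (simp_all add: r sum_distrib_right mult.assoc)
  also have "\<dots> = (\<Sum>j\<in>{1..card L}. Dprime D N L k j * blockB D N F (elem L j) W p)"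
    unfolding blockB_def by (subst sum.swap) (simp add: sum_distrib_left)
  finally show ?thesis .
qed

definition minor_mat :: "(nat \<Rightarrow> nat \<Rightarrow> 'a) \<Rightarrow> nat set \<Rightarrow> nat set \<Rightarrow> 'a mat" where
  "minor_mat x R C = mat (card R) (card C) (\<lambda>(i, j). x (elem R (Suc i)) (elem C (Suc j)))"

lemma subDprime_eq_minor_mat: "subDprime D N L A S = minor_mat (Dprime D N L) (A - S) (Ind L S)"
  unfolding subDprime_def minor_mat_def by simp

lemma minor_mat_cong:
  assumes "finite R" "finite C" "\<And>r c. r \<in> R \<Longrightarrow> c \<in> C \<Longrightarrow> x r c = y r c"
  shows "minor_mat x R C = minor_mat y R C"
  unfolding minor_mat_def using assms by (auto intro!: cong_mat elem_Suc_mem)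

lemma mat_delete_minor_mat:
  assumes fR: "finite R" and fC: "finite C" and i: "i < card R" and c: "c < card C"
  shows "mat_delete (minor_mat x R C) i c = minor_mat x (R - {elem R (Suc i)}) (C - {elem C (Suc c)})"
proof (rule eq_matI)
  fix i' j'
  assume "i' < dim_row (minor_mat x (R - {elem R (Suc i)}) (C - {elem C (Suc c)}))"
    and "j' < dim_col (minor_mat x (R - {elem R (Suc i)}) (C - {elem C (Suc c)}))"
  then have i': "i' < card R - 1" and j': "j' < card C - 1"
    using card_Diff_elem[OF fR i] card_Diff_elem[OF fC c] by (simp_all add: minor_mat_def)
  have "mat_delete (minor_mat x R C) i c $$ (i', j')
      = x (elem R (if i' < i then Suc i' else Suc (Suc i'))) (elem C (if j' < c then Suc j' else Suc (Suc j')))"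
    unfolding mat_delete_def using i' j' by (simp add: minor_mat_def)
  then show "mat_delete (minor_mat x R C) i c $$ (i', j')
      = minor_mat x (R - {elem R (Suc i)}) (C - {elem C (Suc c)}) $$ (i', j')"
    using i' j' card_Diff_elem[OF fR i] card_Diff_elem[OF fC c]
    by (simp add: minor_mat_def elem_Diff_elem[OF fR i i'] elem_Diff_elem[OF fC c j'])
qed (use card_Diff_elem[OF fR i] card_Diff_elem[OF fC c] in \<open>simp_all add: minor_mat_def\<close>)

lemma det_minor_mat_expand:
  fixes x :: "nat \<Rightarrow> nat \<Rightarrow> 'a::comm_ring_1"
  assumes fR: "finite R" and fC: "finite C" and card: "card R = card C" and c: "c \<in> C"
  shows "det (minor_mat x R C)
    = (-1) ^ pos C c * (\<Sum>r\<in>R. (-1) ^ pos R r * x r c * det (minor_mat x (R - {r}) (C - {c})))"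
proof -
  let ?M = "minor_mat x R C" and ?q = "pos C c"
  have q: "?q < card C" by (rule pos_less_card[OF fC c])
  have eq: "elem C (Suc ?q) = c" by (rule elem_Suc_pos[OF fC c])
  have "det ?M = (\<Sum>i<card R. ?M $$ (i, ?q) * cofactor ?M i ?q)"
    by (rule laplace_expansion_column) (simp_all add: minor_mat_def card q)
  also have "\<dots> = (\<Sum>i<card R. (-1) ^ ?q * ((-1) ^ pos R (elem R (Suc i)) * x (elem R (Suc i)) c
      * det (minor_mat x (R - {elem R (Suc i)}) (C - {c}))))"
  proof (rule sum.cong)
    fix i assume "i \<in> {..<card R}"
    then have i: "i < card R" by simp
    have "?M $$ (i, ?q) = x (elem R (Suc i)) c" using i q card eq by (simp add: minor_mat_def)
    moreover have "cofactor ?M i ?q = (-1) ^ (i + ?q) * det (minor_mat x (R - {elem R (Suc i)}) (C - {c}))"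
      unfolding cofactor_def mat_delete_minor_mat[OF fR fC i q] eq ..
    ultimately show "?M $$ (i, ?q) * cofactor ?M i ?q = (-1) ^ ?q * ((-1) ^ pos R (elem R (Suc i))
        * x (elem R (Suc i)) c * det (minor_mat x (R - {elem R (Suc i)}) (C - {c})))"
      using pos_elem_Suc[OF fR i] by (simp add: power_add ac_simps)
  qed simp
  also have "\<dots> = (-1) ^ ?q * (\<Sum>r\<in>R. (-1) ^ pos R r * x r c * det (minor_mat x (R - {r}) (C - {c})))"
    unfolding sum_distrib_left[symmetric]
    by (rule arg_cong[where f = "(*) _"], rule sum.reindex_bij_betw[OF bij_betw_elem_Suc[OF fR]])
  finally show ?thesis .
qed

text \<open>Column 0 never indexes a minor of D' (column indices start at 1), so it can carry a copy
  of column j.\<close>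

definition border_col :: "(nat \<Rightarrow> nat \<Rightarrow> 'a) \<Rightarrow> nat \<Rightarrow> nat \<Rightarrow> nat \<Rightarrow> 'a" where
  "border_col x j r c = (if c = 0 then x r j else x r c)"

lemma sum_minors_repeated_col:
  fixes x :: "nat \<Rightarrow> nat \<Rightarrow> 'a::comm_ring_1"
  assumes fR: "finite R" and fC: "finite C" and card: "card R = Suc (card C)"
    and C0: "0 \<notin> C" and j: "j \<in> C"
  shows "(\<Sum>r\<in>R. (-1) ^ pos R r * x r j * det (minor_mat x (R - {r}) C)) = 0"
proof -
  let ?C = "insert 0 C" and ?y = "border_col x j"
  have fC': "finite ?C" and card': "card R = card ?C" using fC C0 card by simp_all
  have "det (minor_mat ?y R ?C) = (\<Sum>r\<in>R. (-1) ^ pos R r * x r j * det (minor_mat x (R - {r}) C))"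
  proof -
    have "minor_mat ?y (R - {r}) C = minor_mat x (R - {r}) C" for r
      using fR fC C0 by (intro minor_mat_cong) (auto simp: border_col_def)
    moreover have "pos ?C 0 = 0" "?C - {0} = C" using C0 by (auto simp: pos_def)
    ultimately show ?thesis
      using det_minor_mat_expand[OF fR fC' card', of 0 ?y] by (simp add: border_col_def)
  qed
  also have "det (minor_mat ?y R ?C) = 0"
  proof (rule det_identical_columns[where i = 0 and j = "pos ?C j" and n = "card R"])
    let ?q = "pos ?C j"
    have j0: "j \<noteq> 0" using j C0 by metis
    show q: "?q < card R" using pos_less_card[OF fC'] j card' by simp
    show "0 \<noteq> ?q" using pos_less_mono[OF fC', of 0 j] j0 by simp
    have "elem ?C (Suc ?q) = j" using elem_Suc_pos[OF fC'] j by simp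
    moreover have "elem ?C (Suc 0) = 0" using elem_Suc_pos[OF fC', of 0] by (simp add: pos_def)
    ultimately show "col (minor_mat ?y R ?C) 0 = col (minor_mat ?y R ?C) ?q"
      using q card' j0 by (intro eq_vecI) (auto simp: minor_mat_def border_col_def)
  qed (use card' fC' in \<open>simp_all add: minor_mat_def card_gt_0_iff\<close>)
  finally show ?thesis by simp
qed

lemma Ind_eq_image:
  assumes f: "finite L"
  shows "Ind L S = (\<lambda>l. Suc (pos L l)) ` (S \<inter> L)"
proof (rule equalityI; rule subsetI)
  fix i assume "i \<in> Ind L S"
  then have i: "i \<in> {1..card L}" "elem L i \<in> S" by (auto simp: Ind_def)
  then have "i = Suc (pos L (elem L i))" "elem L i \<in> S \<inter> L" using pos_elem[OF f i(1)] by auto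
  then show "i \<in> (\<lambda>l. Suc (pos L l)) ` (S \<inter> L)" by (rule image_eqI)
next
  fix i assume "i \<in> (\<lambda>l. Suc (pos L l)) ` (S \<inter> L)"
  then obtain l where "l \<in> S" "l \<in> L" "i = Suc (pos L l)" by blast
  then show "i \<in> Ind L S" using pos_less_card[OF f] elem_Suc_pos[OF f] by (auto simp: Ind_def Suc_le_eq)
qed

lemma card_Ind:
  assumes "finite L"
  shows "card (Ind L S) = card (S \<inter> L)"
  unfolding Ind_eq_image[OF assms] using inj_on_pos[OF assms] by (intro card_image) (auto simp: inj_on_def)

lemma zero_notin_Ind: "0 \<notin> Ind L S"
  by (simp add: Ind_def)

lemma Ind_insert_leader: "finite L \<Longrightarrow> l \<in> L \<Longrightarrow> Ind L (insert l W) = insert (Suc (pos L l)) (Ind L W)"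
  by (simp add: Ind_eq_image Int_insert_left)

lemma pos_Ind:
  assumes f: "finite L" and l: "l \<in> L"
  shows "pos (Ind L W) (Suc (pos L l)) = pos (W \<inter> L) l"
proof -
  have "strict_mono_on L (\<lambda>l. Suc (pos L l))"
    using strict_mono_on_pos[OF f] by (simp add: strict_mono_on_def)
  then show ?thesis unfolding Ind_eq_image[OF f] using f l by (intro pos_image) auto
qed

lemma Tot_IndBar:
  assumes f: "finite A" and cA: "card A = t + 1"
  shows "Tot (IndBar t A S) = (\<Sum>a\<in>A - S. Suc (pos A a))"
proof -
  have "IndBar t A S = (\<lambda>a. Suc (pos A a)) ` (A - S)"
  proof (rule equalityI; rule subsetI)
    fix i assume "i \<in> IndBar t A S"
    then have i: "i \<in> {1..card A}" "elem A i \<notin> S" using cA by (auto simp: IndBar_def)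
    then have "i = Suc (pos A (elem A i))" "elem A i \<in> A - S" using pos_elem[OF f i(1)] by auto
    then show "i \<in> (\<lambda>a. Suc (pos A a)) ` (A - S)" by (rule image_eqI)
  next
    fix i assume "i \<in> (\<lambda>a. Suc (pos A a)) ` (A - S)"
    then obtain a where "a \<notin> S" "a \<in> A" "i = Suc (pos A a)" by blast
    then show "i \<in> IndBar t A S"
      using pos_less_card[OF f] elem_Suc_pos[OF f] cA by (auto simp: IndBar_def less_Suc_eq_le)
  qed
  moreover have "inj_on (\<lambda>a. Suc (pos A a)) (A - S)"
    using inj_on_pos[OF f] by (auto simp: inj_on_def)
  ultimately show ?thesis unfolding Tot_def by (simp add: sum.reindex)
qed

lemma sum_Suc_card_subsets:
  assumes "finite V"
  shows "(\<Sum>S\<in>{S. S \<subseteq> V \<and> card S = Suc n}. \<Sum>k\<in>S. g S k)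
       = (\<Sum>W\<in>{W. W \<subseteq> V \<and> card W = n}. \<Sum>k\<in>V - W. g (insert k W) k)"
proof -
  let ?SS = "{S. S \<subseteq> V \<and> card S = Suc n}" and ?WW = "{W. W \<subseteq> V \<and> card W = n}"
  have fin: "finite ?SS" "finite ?WW" using assms by (auto intro: finite_subset[of _ "Pow V"])
  have fin_sub: "finite S" if "S \<subseteq> V" for S using assms that finite_subset by blast
  have "(\<Sum>S\<in>?SS. \<Sum>k\<in>S. g S k) = (\<Sum>(S, k)\<in>Sigma ?SS (\<lambda>S. S). g S k)"
    using fin(1) fin_sub by (intro sum.Sigma) auto
  also have "\<dots> = (\<Sum>(W, k)\<in>Sigma ?WW (\<lambda>W. V - W). g (insert k W) k)"
    by (rule sum.reindex_bij_witness[where i = "\<lambda>(W, k). (insert k W, k)" and j = "\<lambda>(S, k). (S - {k}, k)"])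
       (auto simp: insert_absorb fin_sub card_insert_if)
  also have "\<dots> = (\<Sum>W\<in>?WW. \<Sum>k\<in>V - W. g (insert k W) k)"
    using fin(2) assms by (intro sum.Sigma[symmetric]) auto
  finally show ?thesis .
qed

locale leader_setting =
  fixes D :: "nat \<Rightarrow> nat \<Rightarrow> 'a::field" and K N t :: nat and L A :: "nat set"
  assumes leader_set: "leader_set D K N L"
    and A_subset: "A \<subseteq> {1..K} - L"
    and card_A: "card A = t + 1"
begin

lemma finite_L: "finite L"
  using leader_set by (rule leader_set_finite)

lemma finite_A: "finite A"
  using A_subset finite_subset by blast

lemma A_Int_L: "A \<inter> L = {}"
  using A_subset by blast

lemma card_A_Diff:
  assumes W: "W \<subseteq> A \<union> L" "card W = t"
  shows "card (A - W) = Suc (card (Ind L W))"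
proof -
  have "W = (W \<inter> A) \<union> (W \<inter> L)" using W(1) by blast
  also have "card \<dots> = card (W \<inter> A) + card (W \<inter> L)"
    by (rule card_Un_disjoint) (use A_Int_L finite_A finite_L in auto)
  finally have "card W = card (W \<inter> A) + card (W \<inter> L)" .
  moreover have "card (A - W) = card A - card (W \<inter> A)"
  proof -
    have "A - W = A - (W \<inter> A)" by blast
    then show ?thesis using finite_A by (simp add: card_Diff_subset)
  qed
  moreover have "card (W \<inter> A) \<le> card A" using finite_A by (simp add: card_mono)
  ultimately show ?thesis using W(2) card_A card_Ind[OF finite_L, of W] by simp
qed

text \<open>The determinant of the minor of D' with rows A - W and columns Ind_W, bordered on the left
  by column j, written as its first-column Laplace expansion so that it also makes sense for
  j \<in> Ind_W.\<close>

definition bordered_minor :: "nat set \<Rightarrow> nat \<Rightarrow> 'a" where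
  "bordered_minor W j = (\<Sum>r\<in>A - W. (-1) ^ pos (A - W) r * Dprime D N L r j
     * det (minor_mat (Dprime D N L) (A - W - {r}) (Ind L W)))"

definition block_coeff :: "nat set \<Rightarrow> nat \<Rightarrow> nat \<Rightarrow> 'a" where
  "block_coeff W j k = beta D N L t A (insert k W) * msg_sign L (insert k W) k * Dprime D N L k j"

lemma beta_msg_sign_nonleader:
  assumes W: "W \<subseteq> A \<union> L" and k: "k \<in> A - W"
  shows "beta D N L t A (insert k W) * msg_sign L (insert k W) k
    = (-1) ^ Tot (IndBar t A W) * (-1) ^ pos (A - W) k * det (minor_mat (Dprime D N L) (A - W - {k}) (Ind L W))"
proof -
  let ?R = "A - W" and ?m = "pos (W \<inter> A) k"
  define T where "T = (\<Sum>a\<in>?R - {k}. Suc (pos A a))"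
  have kL: "k \<notin> L" using k A_Int_L by blast
  have fW: "finite W" using W finite_A finite_L finite_subset by blast
  have "Tot (IndBar t A (insert k W)) = T"
    unfolding Tot_IndBar[OF finite_A card_A] T_def by (rule sum.cong) auto
  moreover have "A - insert k W = ?R - {k}" "Ind L (insert k W) = Ind L W"
    using kL by (auto simp: Ind_eq_image[OF finite_L])
  ultimately have beta: "beta D N L t A (insert k W) = (-1) ^ (1 + T) * det (minor_mat (Dprime D N L) (?R - {k}) (Ind L W))"
    unfolding beta_def subDprime_eq_minor_mat by simp
  have "insert k W - L = insert k (W \<inter> A)" using W k kL A_Int_L by blast
  then have sign: "msg_sign L (insert k W) k = (-1) ^ ?m"
    using kL k fW by (simp add: msg_sign_def pos_insert_self)
  have "{w\<in>A. w < k} = {w\<in>W \<inter> A. w < k} \<union> {w\<in>?R. w < k}" by auto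
  also have "card \<dots> = card {w\<in>W \<inter> A. w < k} + card {w\<in>?R. w < k}"
    by (rule card_Un_disjoint) (use finite_A in auto)
  finally have "pos A k = ?m + pos ?R k" unfolding pos_def .
  then have "Tot (IndBar t A W) + pos ?R k = (1 + T + ?m) + 2 * pos ?R k"
    unfolding Tot_IndBar[OF finite_A card_A] T_def using finite_A k by (simp add: sum.remove)
  then have "(-1::'a) ^ Tot (IndBar t A W) * (-1) ^ pos ?R k = (-1) ^ (1 + T) * (-1) ^ ?m"
    by (simp only: power_add[symmetric]) (simp add: power_add power_mult)
  then show ?thesis unfolding beta sign by (simp add: ac_simps)
qed

lemma sum_block_coeff_nonleaders:
  assumes "W \<subseteq> A \<union> L"
  shows "(\<Sum>k\<in>A - W. block_coeff W j k) = (-1) ^ Tot (IndBar t A W) * bordered_minor W j"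
  unfolding bordered_minor_def sum_distrib_left
proof (rule sum.cong)
  fix k assume k: "k \<in> A - W"
  show "block_coeff W j k = (-1) ^ Tot (IndBar t A W) * ((-1) ^ pos (A - W) k * Dprime D N L k j
      * det (minor_mat (Dprime D N L) (A - W - {k}) (Ind L W)))"
    unfolding block_coeff_def beta_msg_sign_nonleader[OF assms k] by (simp add: ac_simps)
qed simp

lemma beta_msg_sign_leader:
  assumes W: "W \<subseteq> A \<union> L" "card W = t" and j: "j \<in> {1..card L}" and notin: "elem L j \<notin> W"
  shows "beta D N L t A (insert (elem L j) W) * msg_sign L (insert (elem L j) W) (elem L j)
    = - ((-1) ^ Tot (IndBar t A W) * bordered_minor W j)"
proof -
  let ?l = "elem L j" and ?C = "Ind L W" and ?T = "Tot (IndBar t A W)"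
  have l: "?l \<in> L" and j_eq: "Suc (pos L ?l) = j" using pos_elem[OF finite_L j] j by auto
  have fW: "finite W" using W finite_A finite_L finite_subset by blast
  have fC: "finite ?C" by (simp add: Ind_def)
  have jC: "j \<notin> ?C" using notin by (simp add: Ind_def)
  have "A - insert ?l W = A - W" using l A_Int_L by blast
  moreover have "Ind L (insert ?l W) = insert j ?C" using Ind_insert_leader[OF finite_L l] j_eq by simp
  ultimately have "beta D N L t A (insert ?l W) = (-1) ^ (1 + ?T) * det (minor_mat (Dprime D N L) (A - W) (insert j ?C))"
    unfolding beta_def subDprime_eq_minor_mat Tot_IndBar[OF finite_A card_A] by simp
  also have "det (minor_mat (Dprime D N L) (A - W) (insert j ?C)) = (-1) ^ pos ?C j * bordered_minor W j"
    using det_minor_mat_expand[of "A - W" "insert j ?C" j] finite_A fC jC card_A_Diff[OF W]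
    by (simp add: bordered_minor_def pos_insert_self)
  finally have beta: "beta D N L t A (insert ?l W) = (-1) ^ (1 + ?T) * ((-1) ^ pos ?C j * bordered_minor W j)" .
  have "msg_sign L (insert ?l W) ?l = (-1) ^ pos (W \<inter> L) ?l"
    using l notin fW by (simp add: msg_sign_def Int_insert_left pos_insert_self)
  also have "\<dots> = (-1) ^ pos ?C j" using pos_Ind[OF finite_L l, of W] j_eq by simp
  finally have sign: "msg_sign L (insert ?l W) ?l = (-1) ^ pos ?C j" .
  have sq: "(-1::'a) ^ pos ?C j * (-1) ^ pos ?C j = 1" by (simp add: power_add[symmetric])
  have "(-1) ^ (1 + ?T) * ((-1) ^ pos ?C j * bordered_minor W j) * (-1) ^ pos ?C j
      = (-1) ^ (1 + ?T) * bordered_minor W j * ((-1) ^ pos ?C j * (-1) ^ pos ?C j)"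
    by (simp only: mult_ac)
  then show ?thesis unfolding beta sign sq by simp
qed

lemma sum_block_coeff_leaders:
  assumes W: "W \<subseteq> A \<union> L" "card W = t" and j: "j \<in> {1..card L}"
  shows "(\<Sum>k\<in>L - W. block_coeff W j k) = - ((-1) ^ Tot (IndBar t A W) * bordered_minor W j)"
proof -
  let ?l = "elem L j"
  have l: "?l \<in> L" using pos_elem[OF finite_L j] by simp
  have "(\<Sum>k\<in>L - W. block_coeff W j k)
      = (\<Sum>k\<in>L - W. if k = ?l then beta D N L t A (insert k W) * msg_sign L (insert k W) k else 0)"
    by (rule sum.cong) (simp_all add: block_coeff_def Dprime_leader[OF leader_set _ j])
  also have "\<dots> = (if ?l \<in> W then 0 else beta D N L t A (insert ?l W) * msg_sign L (insert ?l W) ?l)"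
    using finite_L l by (simp add: sum.delta')
  also have "\<dots> = - ((-1) ^ Tot (IndBar t A W) * bordered_minor W j)"
  proof (cases "?l \<in> W")
    case True
    then have "j \<in> Ind L W" using j by (simp add: Ind_def)
    then have "bordered_minor W j = 0" unfolding bordered_minor_def
      using finite_A card_A_Diff[OF W] zero_notin_Ind by (intro sum_minors_repeated_col) (simp_all add: Ind_def)
    then show ?thesis using True by simp
  qed (simp add: beta_msg_sign_leader[OF W j])
  finally show ?thesis .
qed

lemma sum_block_coeff_eq_0:
  assumes W: "W \<subseteq> A \<union> L" "card W = t" and j: "j \<in> {1..card L}"
  shows "(\<Sum>k\<in>(A \<union> L) - W. block_coeff W j k) = 0"
proof -
  have "(A \<union> L) - W = (A - W) \<union> (L - W)" "(A - W) \<inter> (L - W) = {}" using A_Int_L by auto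
  then have "(\<Sum>k\<in>(A \<union> L) - W. block_coeff W j k) = (\<Sum>k\<in>A - W. block_coeff W j k) + (\<Sum>k\<in>L - W. block_coeff W j k)"
    using finite_A finite_L by (simp add: sum.union_disjoint)
  then show ?thesis by (simp add: sum_block_coeff_nonleaders[OF W(1)] sum_block_coeff_leaders[OF W j])
qed

lemma sum_beta_msgW_eq_0:
  "(\<Sum>S\<in>{S. S \<subseteq> A \<union> L \<and> card S = t + 1}. beta D N L t A S * msgW D N L F S p) = 0"
proof -
  let ?V = "A \<union> L" and ?G = "\<lambda>j W. blockB D N F (elem L j) W p"
  have fV: "finite ?V" using finite_A finite_L by simp
  have "beta D N L t A S * msgW D N L F S p
      = (\<Sum>k\<in>S. \<Sum>j\<in>{1..card L}. ?G j (S - {k}) * block_coeff (S - {k}) j k)" if S: "S \<subseteq> ?V" for S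
  proof -
    have "S \<subseteq> {1..K}" using S A_subset leader_set_subset[OF leader_set] by blast
    moreover have "finite S" using S fV finite_subset by blast
    ultimately show ?thesis
      unfolding msgW_eq_signed_sum[OF \<open>finite S\<close>] sum_distrib_left
      by (intro sum.cong) (auto simp: blockB_expand[OF leader_set] block_coeff_def insert_absorb
          sum_distrib_left ac_simps)
  qed
  then have "(\<Sum>S\<in>{S. S \<subseteq> ?V \<and> card S = t + 1}. beta D N L t A S * msgW D N L F S p)
      = (\<Sum>S\<in>{S. S \<subseteq> ?V \<and> card S = Suc t}. \<Sum>k\<in>S. \<Sum>j\<in>{1..card L}. ?G j (S - {k}) * block_coeff (S - {k}) j k)"
    by (intro sum.cong) auto
  also have "\<dots> = (\<Sum>W\<in>{W. W \<subseteq> ?V \<and> card W = t}. \<Sum>k\<in>?V - W. \<Sum>j\<in>{1..card L}. ?G j W * block_coeff W j k)"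
    unfolding sum_Suc_card_subsets[OF fV] by (intro sum.cong) auto
  also have "\<dots> = (\<Sum>W\<in>{W. W \<subseteq> ?V \<and> card W = t}. \<Sum>j\<in>{1..card L}. ?G j W * (\<Sum>k\<in>?V - W. block_coeff W j k))"
    by (simp add: sum.swap[where A = "_ - _"] sum_distrib_left)
  also have "\<dots> = 0"
    by (simp add: sum_block_coeff_eq_0)
  finally show ?thesis .
qed

lemma beta_self: "beta D N L t A A = -1"
proof -
  have "Ind L A = {}" using A_Int_L by (auto simp: Ind_eq_image[OF finite_L])
  then show ?thesis
    by (simp add: beta_def subDprime_eq_minor_mat Tot_IndBar[OF finite_A card_A] minor_mat_def)
qed

lemma msgW_decomposition:
  "msgW D N L F A p = (\<Sum>S\<in>{S. S \<subseteq> A \<union> L \<and> card S = t + 1 \<and> S \<noteq> A}. beta D N L t A S * msgW D N L F S p)"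
proof -
  let ?SS = "{S. S \<subseteq> A \<union> L \<and> card S = t + 1 \<and> S \<noteq> A}"
  have "{S. S \<subseteq> A \<union> L \<and> card S = t + 1} = insert A ?SS" using card_A by auto
  moreover have "finite ?SS" using finite_A finite_L by (auto intro: finite_subset[of _ "Pow (A \<union> L)"])
  ultimately have "0 = - msgW D N L F A p + (\<Sum>S\<in>?SS. beta D N L t A S * msgW D N L F S p)"
    using sum_beta_msgW_eq_0[of F p] by (simp add: beta_self)
  then show ?thesis by (simp add: eq_neg_iff_add_eq_0 add_eq_0_iff)
qed

lemma subset_meets_leaders:
  assumes "S \<subseteq> A \<union> L" "card S = t + 1" "S \<noteq> A"
  shows "S \<inter> L \<noteq> {}"
proof
  assume "S \<inter> L = {}"
  then have "S \<subseteq> A" using assms(1) by blast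
  then have "S = A" using card_subset_eq[OF finite_A] assms(2) card_A by simp
  then show False using assms(3) by contradiction
qed

end

theorem mainTheorem7:
  fixes D :: "nat \<Rightarrow> nat \<Rightarrow> 'a :: {field, finite}"
    and K N t ell :: nat
    and L A :: "nat set"
    and F :: "nat \<Rightarrow> nat set \<Rightarrow> nat \<Rightarrow> 'a"
  assumes "t < K"
    and "leader_set D K N L"
    and "A \<subseteq> {1..K} - L"
    and "card A = t + 1"
  shows "(\<forall>p<ell. msgW D N L F A p =
            (\<Sum>S\<in>{S. S \<subseteq> A \<union> L \<and> card S = t + 1 \<and> S \<noteq> A}.
               beta D N L t A S * msgW D N L F S p))
       \<and> (\<forall>S. S \<subseteq> A \<union> L \<and> card S = t + 1 \<and> S \<noteq> A \<longrightarrow> S \<inter> L \<noteq> {})"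
proof -
  interpret leader_setting D K N t L A
    using assms(2-4) by unfold_locales
  show ?thesis using msgW_decomposition subset_meets_leaders by blast
qed

end
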